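(* Let $t_\nu\in\mathbb{C}$ be a sequence converging to $0$, and for each $\nu$ let $f_\nu$ be a holomorphic function on (a neighbourhood of) $A_{t_\nu}=\{(z,w)\in\mathbb{C}^2:|z|\le1,|w|\le1,zw=t_\nu\}$. Suppose that $z\mapsto f_\nu(z,t_\nu/z)$ converges uniformly on $\{\tfrac12\le|z|\le1\}$ to a function $F$ holomorphic there, and $w\mapsto f_\nu(t_\nu/w,w)$ converges uniformly on $\{\tfrac12\le|w|\le1\}$ to a function $G$ holomorphic there. Then there exists a holomorphic function $f$ on $A_0=\{(z,w):|z|\le1,|w|\le1,zw=0\}$ (i.e. a continuous function holomorphic on each of the two discs $\{w=0\}$, $\{z=0\}$) with $f(z,0)=F(z)$ for $\tfrac12\le|z|\le1$ and $f(0,w)=G(w)$ for $\tfrac12\le|w|\le1$. Moreover, if $F\equiv0$ and $G\equiv0$, then $\sup_{A_{t_\nu}}|f_\nu|\to0$ as $\nu\to\infty$. *)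

theory Defs
  imports "HOL-Analysis.Analysis"
begin

definition Aset :: "complex \<Rightarrow> (complex \<times> complex) set" where
  "Aset t = {(z, w). norm z \<le> 1 \<and> norm w \<le> 1 \<and> z * w = t}"

definition holomorphic2_on :: "(complex \<times> complex \<Rightarrow> complex) \<Rightarrow> (complex \<times> complex) set \<Rightarrow> bool" where
  "holomorphic2_on f U \<longleftrightarrow>
     (\<forall>p\<in>U. \<exists>L. (f has_derivative L) (at p) \<and> (\<forall>c a b. L (c * a, c * b) = c * L (a, b)))"

definition holomorphic_on_A0 :: "(complex \<times> complex \<Rightarrow> complex) \<Rightarrow> bool" where
  "holomorphic_on_A0 f \<longleftrightarrow> continuous_on (Aset 0) f
     \<and> (\<lambda>z. f (z, 0)) holomorphic_on ball 0 1
     \<and> (\<lambda>w. f (0, w)) holomorphic_on ball 0 1"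

definition half_annulus :: "complex set" where
  "half_annulus = {z. 1/2 \<le> norm z \<and> norm z \<le> 1}"

end

theory Submission
  imports Defs "HOL-Complex_Analysis.Complex_Analysis"
begin

text \<open>
  Write Fseq n z = f n (z, t n / z) and Gseq n w = f n (t n / w, w). Both are holomorphic near the
  annulus |t n| \<le> |z| \<le> 1, and Fseq n z = Gseq n (t n / z), so the bound of Gseq n on |w| = 1/2
  bounds Fseq n on the circle |z| = 2|t n|. Shrinking the unit circle to that circle in Cauchy's
  formula shows that Fseq n is reproduced by its Cauchy integral over |z| = 1 up to an error
  O(|t n|). In the limit, F coincides on the half annulus with its own Cauchy integral over the unit
  circle, which extends it holomorphically to the disc; likewise for G. The two extensions agree at
  the origin because the substitution w = t n / z turns the integral of Fseq n z dz/z into that of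
  Gseq n w dw/w. If F = G = 0, the maximum modulus principle on the annulus bounds f n on A_(t n)
  by the values of Fseq n and Gseq n on the unit circle, which tend to zero.
\<close>

lemma uniform_limit_eventually_bounded:
  fixes f :: "nat \<Rightarrow> 'a::topological_space \<Rightarrow> 'b::real_normed_vector"
  assumes lim: "uniform_limit S f l sequentially" and "compact S" "continuous_on S l"
  shows "\<exists>M. \<forall>\<^sub>F n in sequentially. \<forall>x\<in>S. norm (f n x) \<le> M"
proof -
  obtain B where B: "\<forall>x\<in>S. norm (l x) \<le> B"
    using compact_imp_bounded[OF compact_continuous_image[OF assms(3,2)]] by (auto simp: bounded_iff)
  have "\<forall>\<^sub>F n in sequentially. \<forall>x\<in>S. dist (f n x) (l x) < 1"
    using uniform_limitD[OF lim] by simp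
  then have "\<forall>\<^sub>F n in sequentially. \<forall>x\<in>S. norm (f n x) \<le> B + 1"
  proof (rule eventually_mono)
    fix n
    assume close: "\<forall>x\<in>S. dist (f n x) (l x) < 1"
    show "\<forall>x\<in>S. norm (f n x) \<le> B + 1"
    proof
      fix x
      assume "x \<in> S"
      have "norm (f n x) \<le> norm (l x) + dist (f n x) (l x)"
        using norm_triangle_sub[of "f n x" "l x"] by (simp add: dist_norm add.commute)
      then show "norm (f n x) \<le> B + 1"
        using B close \<open>x \<in> S\<close> by fastforce
    qed
  qed
  then show ?thesis
    by blast
qed

lemma Sup_norm_tendsto_zeroI:
  fixes g :: "'i \<Rightarrow> 'a \<Rightarrow> 'b::real_normed_vector"
  assumes "\<And>e. 0 < e \<Longrightarrow> \<forall>\<^sub>F n in F. S n \<noteq> {} \<and> (\<forall>y\<in>S n. norm (g n y) \<le> e)"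
  shows "((\<lambda>n. Sup ((\<lambda>y. norm (g n y)) ` S n)) \<longlongrightarrow> 0) F"
proof -
  have Sup_bounds: "0 \<le> Sup ((\<lambda>y. norm (g n y)) ` S n) \<and> Sup ((\<lambda>y. norm (g n y)) ` S n) \<le> e"
    if nonempty: "S n \<noteq> {}" and bounded: "\<forall>y\<in>S n. norm (g n y) \<le> e" for n e
  proof -
    obtain y where "y \<in> S n"
      using nonempty by blast
    moreover have "bdd_above ((\<lambda>y. norm (g n y)) ` S n)"
      using bounded by (intro bdd_aboveI2) auto
    ultimately have "norm (g n y) \<le> Sup ((\<lambda>y. norm (g n y)) ` S n)"
      by (intro cSup_upper) auto
    moreover have "Sup ((\<lambda>y. norm (g n y)) ` S n) \<le> e"
      using nonempty bounded by (intro cSup_least) auto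
    ultimately show ?thesis
      using norm_ge_zero order_trans by blast
  qed
  show ?thesis
  proof (rule order_tendstoI)
    fix a :: real
    assume "a < 0"
    show "\<forall>\<^sub>F n in F. a < Sup ((\<lambda>y. norm (g n y)) ` S n)"
      using assms[OF zero_less_one] by (rule eventually_mono) (use \<open>a < 0\<close> Sup_bounds in fastforce)
  next
    fix a :: real
    assume "0 < a"
    then have "0 < a/2"
      by simp
    from assms[OF this] show "\<forall>\<^sub>F n in F. Sup ((\<lambda>y. norm (g n y)) ` S n) < a"
      by (rule eventually_mono) (use Sup_bounds \<open>0 < a\<close> in fastforce)
  qed
qed

definition annulus :: "real \<Rightarrow> real \<Rightarrow> complex set" where
  "annulus r R = {z. r \<le> norm z \<and> norm z \<le> R}"

lemma half_annulus_eq_annulus: "half_annulus = annulus (1/2) 1"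
  by (simp add: half_annulus_def annulus_def)

lemma annulus_eq_cball_Diff_ball: "annulus r R = cball 0 R - ball 0 r"
  by (auto simp: annulus_def)

lemma compact_annulus: "compact (annulus r R)"
  unfolding annulus_eq_cball_Diff_ball by (intro compact_diff compact_cball open_ball)

lemma closed_annulus: "closed (annulus r R)"
  by (simp add: compact_annulus compact_imp_closed)

lemma annulus_antimono: "r' \<le> r \<Longrightarrow> annulus r R \<subseteq> annulus r' R"
  by (auto simp: annulus_def)

lemma sphere_subset_annulus: "r \<le> \<rho> \<Longrightarrow> \<rho> \<le> R \<Longrightarrow> sphere 0 \<rho> \<subseteq> annulus r R"
  by (auto simp: annulus_def)

lemma homotopic_loops_circlepath_annulus:
  assumes "0 \<le> a" "a \<le> b" "annulus a b \<subseteq> S"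
  shows "homotopic_loops S (circlepath 0 b) (circlepath 0 a)"
proof (rule homotopic_loops_linear)
  fix s :: real
  show "closed_segment (circlepath 0 b s) (circlepath 0 a s) \<subseteq> S"
  proof
    fix x assume "x \<in> closed_segment (circlepath 0 b s) (circlepath 0 a s)"
    then obtain u where u: "0 \<le> u" "u \<le> 1"
      and x: "x = (1 - u) *\<^sub>R circlepath 0 b s + u *\<^sub>R circlepath 0 a s"
      unfolding closed_segment_def by blast
    define e where "e = exp (2 * of_real pi * \<i> * of_real s)"
    have "x = of_real ((1 - u) * b + u * a) * e"
      unfolding x circlepath e_def by (simp add: scaleR_conv_of_real algebra_simps)
    moreover have "norm e = 1"
      unfolding e_def by (simp add: norm_exp)
    moreover have "0 \<le> (1 - u) * b + u * a"
      using assms u by simp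
    ultimately have norm_x: "norm x = (1 - u) * b + u * a"
      by (simp only: norm_mult norm_of_real) simp
    have "0 \<le> (1 - u) * (b - a)" "0 \<le> u * (b - a)"
      using assms u by simp_all
    then have "a \<le> norm x" "norm x \<le> b"
      unfolding norm_x by (simp_all add: algebra_simps)
    then show "x \<in> S"
      using assms(3) by (auto simp: annulus_def)
  qed
qed auto

section \<open>Slices of holomorphic functions of two variables\<close>

lemma holomorphic2_on_field_differentiable_graph:
  assumes "holomorphic2_on f U" "(z, \<phi> z) \<in> U" "(\<phi> has_field_derivative d) (at z)"
  shows "(\<lambda>z. f (z, \<phi> z)) field_differentiable at z"
proof -
  obtain L where L: "(f has_derivative L) (at (z, \<phi> z))"
    and linear: "\<forall>c a b. L (c * a, c * b) = c * L (a, b)"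
    using assms(1,2) unfolding holomorphic2_on_def by blast
  have graph: "((\<lambda>z. (z, \<phi> z)) has_derivative (\<lambda>h. (h, d * h))) (at z)"
    using assms(3) by (auto intro!: derivative_eq_intros simp: has_field_derivative_def)
  have "((\<lambda>z. f (z, \<phi> z)) has_derivative (\<lambda>h. L (h, d * h))) (at z)"
    using diff_chain_at[OF graph] L by (simp add: o_def)
  moreover have "(\<lambda>h. L (h, d * h)) = (\<lambda>h. L (1, d) * h)"
    using linear by (metis mult.commute mult.right_neutral)
  ultimately show ?thesis
    unfolding field_differentiable_def has_field_derivative_def by auto
qed

lemma holomorphic2_on_swap:
  assumes "holomorphic2_on f U"
  shows "holomorphic2_on (\<lambda>p. f (snd p, fst p)) ((\<lambda>p. (snd p, fst p)) -` U)"
  unfolding holomorphic2_on_def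
proof
  fix p :: "complex \<times> complex"
  assume "p \<in> (\<lambda>p. (snd p, fst p)) -` U"
  then obtain L where L: "(f has_derivative L) (at (snd p, fst p))"
    and linear: "\<forall>c a b. L (c * a, c * b) = c * L (a, b)"
    using assms unfolding holomorphic2_on_def by auto
  have swap: "((\<lambda>p::complex \<times> complex. (snd p, fst p)) has_derivative (\<lambda>p. (snd p, fst p))) (at p)"
    by (auto intro!: derivative_eq_intros)
  have "((\<lambda>p. f (snd p, fst p)) has_derivative (\<lambda>p. L (snd p, fst p))) (at p)"
    using diff_chain_at[OF swap] L by (simp add: o_def)
  with linear show "\<exists>L. ((\<lambda>p. f (snd p, fst p)) has_derivative L) (at p)
      \<and> (\<forall>c a b. L (c * a, c * b) = c * L (a, b))"
    by auto
qed

lemma holomorphic_slice_near_annulus: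
  assumes "open U" "Aset t \<subseteq> U" "holomorphic2_on f U"
  shows "\<exists>V. open V \<and> annulus (norm t) 1 \<subseteq> V \<and> (\<lambda>z. f (z, t / z)) holomorphic_on V"
proof (cases "t = 0")
  case True
  define V where "V = (\<lambda>z. (z, 0)) -` U"
  have "open V"
    unfolding V_def using assms(1) by (intro open_vimage continuous_intros)
  moreover have "annulus (norm t) 1 \<subseteq> V"
    using assms(2) unfolding True by (auto simp: annulus_def V_def Aset_def)
  moreover have "(\<lambda>z. f (z, 0)) field_differentiable at z" if "z \<in> V" for z
    using that by (intro holomorphic2_on_field_differentiable_graph[OF assms(3), where d = 0])
      (simp_all add: V_def)
  ultimately show ?thesis
    by (auto simp: True holomorphic_on_def field_differentiable_at_within)
next
  case False
  define V where "V = - {0} \<inter> (\<lambda>z. (z, t / z)) -` U"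
  have "open V"
    unfolding V_def using assms(1) by (intro continuous_open_preimage continuous_intros) auto
  moreover have "annulus (norm t) 1 \<subseteq> V"
  proof
    fix z assume z: "z \<in> annulus (norm t) 1"
    then have "z \<noteq> 0"
      using False by (auto simp: annulus_def)
    moreover have "norm (t / z) \<le> 1"
      using z \<open>z \<noteq> 0\<close> by (simp add: annulus_def norm_divide divide_le_eq_1)
    ultimately have "(z, t / z) \<in> Aset t"
      using z by (simp add: Aset_def annulus_def)
    then show "z \<in> V"
      using assms(2) \<open>z \<noteq> 0\<close> unfolding V_def by blast
  qed
  moreover have "(\<lambda>z. f (z, t / z)) field_differentiable at z" if z: "z \<in> V" for z
  proof (rule holomorphic2_on_field_differentiable_graph[OF assms(3)])
    show "(z, t / z) \<in> U"
      using z by (simp add: V_def)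
    show "((\<lambda>z. t / z) has_field_derivative - t / z^2) (at z)"
      using z by (auto simp: V_def power2_eq_square intro!: derivative_eq_intros)
  qed
  ultimately show ?thesis
    by (auto simp: holomorphic_on_def field_differentiable_at_within)
qed

section \<open>Cauchy integrals and the maximum modulus principle on annuli\<close>

lemma sphere_subset_half_annulus: "sphere 0 1 \<subseteq> half_annulus"
  by (simp add: half_annulus_eq_annulus sphere_subset_annulus)

lemma continuous_on_sphere_divide:
  fixes F :: "complex \<Rightarrow> complex"
  shows "continuous_on (sphere 0 1) F \<Longrightarrow> norm z < 1 \<Longrightarrow> continuous_on (sphere 0 1) (\<lambda>\<zeta>. F \<zeta> / (\<zeta> - z))"
  by (intro continuous_intros) auto

lemma Cauchy_integral_circlepath_holomorphic:
  assumes "continuous_on (sphere 0 1) F"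
  shows "(\<lambda>z. contour_integral (circlepath 0 1) (\<lambda>\<zeta>. F \<zeta> / (\<zeta> - z))) holomorphic_on ball 0 1"
  unfolding holomorphic_on_def
proof
  fix w :: complex
  assume w: "w \<in> ball 0 1"
  have "((\<lambda>\<zeta>. F \<zeta> / (\<zeta> - z) ^ 1) has_contour_integral
      contour_integral (circlepath 0 1) (\<lambda>\<zeta>. F \<zeta> / (\<zeta> - z))) (circlepath 0 1)"
    if "z \<in> ball 0 1" for z
    using that assms
    by (auto intro!: has_contour_integral_integral contour_integrable_continuous_circlepath
        continuous_on_sphere_divide)
  then have "((\<lambda>z. contour_integral (circlepath 0 1) (\<lambda>\<zeta>. F \<zeta> / (\<zeta> - z))) has_field_derivative
      (of_nat 1 * contour_integral (circlepath 0 1) (\<lambda>\<zeta>. F \<zeta> / (\<zeta> - w) ^ Suc 1))) (at w)"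
    using assms w by (intro Cauchy_next_derivative_circlepath(2)) auto
  then show "(\<lambda>z. contour_integral (circlepath 0 1) (\<lambda>\<zeta>. F \<zeta> / (\<zeta> - z)))
      field_differentiable at w within ball 0 1"
    using field_differentiable_at_within field_differentiable_def by blast
qed

lemma Cauchy_integral_circlepath_uniform_limit:
  assumes lim: "uniform_limit (sphere 0 1) H L sequentially"
    and cont: "\<forall>\<^sub>F n in sequentially. continuous_on (sphere 0 1) (H n)" "continuous_on (sphere 0 1) L"
    and z: "norm z < 1"
  shows "(\<lambda>n. contour_integral (circlepath 0 1) (\<lambda>\<zeta>. H n \<zeta> / (\<zeta> - z)))
    \<longlonglongrightarrow> contour_integral (circlepath 0 1) (\<lambda>\<zeta>. L \<zeta> / (\<zeta> - z))"
proof (rule contour_integral_uniform_limit_circlepath(2))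
  show "\<forall>\<^sub>F n in sequentially. (\<lambda>\<zeta>. H n \<zeta> / (\<zeta> - z)) contour_integrable_on circlepath 0 1"
    using cont(1) by (rule eventually_mono)
      (use z in \<open>auto intro!: contour_integrable_continuous_circlepath continuous_on_sphere_divide\<close>)
  have bounded: "bounded (L ` sphere 0 1)"
    using compact_continuous_image[OF cont(2) compact_sphere] by (rule compact_imp_bounded)
  have distance: "1 - norm z \<le> norm (\<zeta> - z)" if "\<zeta> \<in> sphere 0 1" for \<zeta>
    using that norm_triangle_ineq2[of \<zeta> z] by simp
  show "uniform_limit (sphere 0 1) (\<lambda>n \<zeta>. H n \<zeta> / (\<zeta> - z)) (\<lambda>\<zeta>. L \<zeta> / (\<zeta> - z)) sequentially"
    by (rule uniform_lim_divide[OF lim uniform_limit_const bounded distance]) (use z in auto)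
qed auto

lemma norm_le_on_annulus:
  assumes hol: "h holomorphic_on annulus r R" and r: "0 \<le> r"
    and outer: "\<And>z. norm z = R \<Longrightarrow> norm (h z) \<le> B"
    and inner: "\<And>z. 0 < r \<Longrightarrow> norm z = r \<Longrightarrow> norm (h z) \<le> B"
    and z: "z \<in> annulus r R"
  shows "norm (h z) \<le> B"
proof (rule maximum_modulus_frontier[where S = "annulus r R" and f = h and \<xi> = z])
  show "h holomorphic_on interior (annulus r R)"
    by (rule holomorphic_on_subset[OF hol interior_subset])
  show "continuous_on (closure (annulus r R)) h"
    using closed_annulus holomorphic_on_imp_continuous_on[OF hol] by simp
  show "bounded (annulus r R)"
    by (simp add: compact_annulus compact_imp_bounded)
  fix y
  assume "y \<in> frontier (annulus r R)"
  then have y: "y \<in> annulus r R" "y \<notin> interior (annulus r R)"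
    using closed_annulus frontier_subset_closed by (auto simp: frontier_def)
  have "open {w::complex. r < norm w \<and> norm w < R}"
    by (intro open_Collect_conj open_Collect_less continuous_intros)
  then have open_annulus: "{w. r < norm w \<and> norm w < R} \<subseteq> interior (annulus r R)"
    by (intro interior_maximal) (auto simp: annulus_def)
  show "norm (h y) \<le> B"
  proof (cases "norm y = R")
    case True
    then show ?thesis by (rule outer)
  next
    case False
    then have "norm y < R"
      using y(1) by (simp add: annulus_def)
    then have "norm y = r"
      using y open_annulus by (force simp: annulus_def)
    moreover have "0 < r"
    proof (rule ccontr)
      assume "\<not> 0 < r"
      then have "ball 0 R \<subseteq> interior (annulus r R)"
        using r by (intro interior_maximal) (auto simp: annulus_def)
      then show False
        using y(2) \<open>norm y < R\<close> by auto
    qed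
    ultimately show ?thesis
      by (intro inner)
  qed
qed (use z in auto)

lemma contour_integral_circlepath_difference_quotient:
  fixes h :: "complex \<Rightarrow> complex"
  assumes "continuous_on (sphere 0 1) h" "norm z < 1"
  shows "contour_integral (circlepath 0 1) (\<lambda>\<zeta>. if \<zeta> = z then c else (h \<zeta> - h z) / (\<zeta> - z))
    = contour_integral (circlepath 0 1) (\<lambda>\<zeta>. h \<zeta> / (\<zeta> - z)) - 2 * pi * \<i> * h z"
proof (rule contour_integral_unique)
  have "((\<lambda>\<zeta>. h \<zeta> / (\<zeta> - z)) has_contour_integral
      contour_integral (circlepath 0 1) (\<lambda>\<zeta>. h \<zeta> / (\<zeta> - z))) (circlepath 0 1)"
    using assms by (auto intro!: has_contour_integral_integral contour_integrable_continuous_circlepath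
        continuous_on_sphere_divide)
  moreover have "((\<lambda>\<zeta>. h z / (\<zeta> - z)) has_contour_integral 2 * pi * \<i> * h z) (circlepath 0 1)"
    using Cauchy_integral_circlepath_simple[of "\<lambda>_. h z" 0 1 z] assms(2) by simp
  ultimately show "((\<lambda>\<zeta>. if \<zeta> = z then c else (h \<zeta> - h z) / (\<zeta> - z)) has_contour_integral
      contour_integral (circlepath 0 1) (\<lambda>\<zeta>. h \<zeta> / (\<zeta> - z)) - 2 * pi * \<i> * h z) (circlepath 0 1)"
    by (elim has_contour_integral_eq[OF has_contour_integral_diff])
      (use assms(2) in \<open>auto simp: diff_divide_distrib\<close>)
qed

(* The difference quotient of h at z is holomorphic on V, so its integral over the unit circle
   equals that over the circle of radius \<rho>, where it is bounded by 8 M. *)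
lemma Cauchy_integral_circlepath_error:
  fixes h :: "complex \<Rightarrow> complex"
  assumes V: "open V" "annulus \<rho> 1 \<subseteq> V" and hol: "h holomorphic_on V"
    and \<rho>: "0 \<le> \<rho>" "\<rho> \<le> 1/4"
    and outer: "\<forall>\<zeta>\<in>half_annulus. norm (h \<zeta>) \<le> M"
    and inner: "\<And>\<zeta>. 0 < \<rho> \<Longrightarrow> norm \<zeta> = \<rho> \<Longrightarrow> norm (h \<zeta>) \<le> M"
    and z: "1/2 \<le> norm z" "norm z < 1"
  shows "norm (contour_integral (circlepath 0 1) (\<lambda>\<zeta>. h \<zeta> / (\<zeta> - z)) - 2 * pi * \<i> * h z)
    \<le> 16 * pi * M * \<rho>"
proof -
  define q where "q \<zeta> = (if \<zeta> = z then deriv h z else (h \<zeta> - h z) / (\<zeta> - z))" for \<zeta>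
  have q_hol: "q holomorphic_on V"
    unfolding q_def by (rule pole_lemma_open[OF hol V(1)])
  have "sphere 0 1 \<subseteq> V"
    using V(2) \<rho> sphere_subset_annulus[of \<rho> 1 1] by auto
  then have "continuous_on (sphere 0 1) h"
    using holomorphic_on_imp_continuous_on[OF hol] continuous_on_subset by blast
  then have "contour_integral (circlepath 0 1) (\<lambda>\<zeta>. h \<zeta> / (\<zeta> - z)) - 2 * pi * \<i> * h z
      = contour_integral (circlepath 0 1) q"
    unfolding q_def using z(2) by (rule contour_integral_circlepath_difference_quotient[symmetric])
  also have "\<dots> = contour_integral (circlepath 0 \<rho>) q"
    using homotopic_loops_circlepath_annulus[OF \<rho>(1) _ V(2)] \<rho>
    by (intro Cauchy_theorem_homotopic_loops[OF _ V(1) q_hol]) auto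
  finally have unit_eq_inner: "contour_integral (circlepath 0 1) (\<lambda>\<zeta>. h \<zeta> / (\<zeta> - z)) - 2 * pi * \<i> * h z
      = contour_integral (circlepath 0 \<rho>) q" .
  have "norm (contour_integral (circlepath 0 \<rho>) q) \<le> 16 * pi * M * \<rho>"
  proof (cases "\<rho> = 0")
    case True
    have "circlepath 0 0 = linepath 0 0"
      by (simp add: circlepath linepath_def)
    with True show ?thesis
      by simp
  next
    case False
    with \<rho> have "0 < \<rho>" by simp
    have "z \<in> half_annulus"
      using z by (simp add: half_annulus_def)
    then have "M \<ge> 0"
      using outer norm_ge_zero order_trans by blast
    have "sphere 0 \<rho> \<subseteq> V"
      using V(2) \<rho> sphere_subset_annulus[of \<rho> \<rho> 1] by auto
    then have "(q has_contour_integral contour_integral (circlepath 0 \<rho>) q) (circlepath 0 \<rho>)"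
      using holomorphic_on_imp_continuous_on[OF q_hol] \<open>0 < \<rho>\<close>
      by (intro has_contour_integral_integral contour_integrable_continuous_circlepath)
        (auto intro: continuous_on_subset)
    moreover have "norm (q \<zeta>) \<le> 8 * M" if "norm \<zeta> = \<rho>" for \<zeta>
    proof -
      have "1/4 \<le> norm (\<zeta> - z)"
        using norm_triangle_ineq2[of z \<zeta>] that \<rho> z by (simp add: norm_minus_commute)
      moreover have "norm (h \<zeta> - h z) \<le> 2 * M"
        using norm_triangle_ineq4[of "h \<zeta>" "h z"] inner[OF \<open>0 < \<rho>\<close> that] outer z
        by (fastforce simp: half_annulus_def)
      ultimately have "norm (h \<zeta> - h z) / norm (\<zeta> - z) \<le> 2 * M / (1/4)"
        using \<open>M \<ge> 0\<close> by (intro frac_le) auto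
      then show ?thesis
        using \<open>1/4 \<le> norm (\<zeta> - z)\<close> by (auto simp: q_def norm_divide)
    qed
    ultimately have "norm (contour_integral (circlepath 0 \<rho>) q) \<le> 8 * M * (2 * pi * \<rho>)"
      using \<open>0 < \<rho>\<close> \<open>M \<ge> 0\<close> by (intro has_contour_integral_bound_circlepath) auto
    then show ?thesis
      by (simp add: mult_ac)
  qed
  with unit_eq_inner show ?thesis
    by simp
qed

(* The inversion maps the unit circle onto the circle of radius |t| with reversed orientation;
   reversed again, it starts at t, which the circle reaches after the fraction Arg2pi t / (2 pi)
   of a turn. *)
lemma reversepath_inversion_circlepath:
  "reversepath ((\<lambda>\<omega>. t / \<omega>) \<circ> circlepath 0 1) = shiftpath (Arg2pi t / (2 * pi)) (circlepath 0 (norm t))"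
proof
  fix x :: real
  define \<beta> where "\<beta> = Arg2pi t / (2 * pi)"
  have t_polar: "t = of_real (norm t) * exp (2 * of_real pi * \<i> * of_real \<beta>)"
    using Arg2pi_eq[of t] by (simp add: \<beta>_def mult_ac)
  have "exp (2 * of_real pi * \<i> * of_real (1 - x)) = inverse (exp (2 * of_real pi * \<i> * of_real x))"
    by (simp add: algebra_simps exp_diff exp_two_pi_i' field_simps)
  then have "reversepath ((\<lambda>\<omega>. t / \<omega>) \<circ> circlepath 0 1) x = t * exp (2 * of_real pi * \<i> * of_real x)"
    unfolding reversepath_def o_def circlepath by (simp add: divide_inverse)
  moreover have "exp (2 * of_real pi * \<i> * of_real (\<beta> + x - 1)) = exp (2 * of_real pi * \<i> * of_real (\<beta> + x))"
    by (simp add: algebra_simps exp_diff exp_two_pi_i')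
  moreover have "exp (2 * of_real pi * \<i> * of_real (\<beta> + x))
      = exp (2 * of_real pi * \<i> * of_real \<beta>) * exp (2 * of_real pi * \<i> * of_real x)"
    by (simp add: algebra_simps exp_add[symmetric])
  ultimately show "reversepath ((\<lambda>\<omega>. t / \<omega>) \<circ> circlepath 0 1) x
      = shiftpath (Arg2pi t / (2 * pi)) (circlepath 0 (norm t)) x"
    unfolding shiftpath_def circlepath \<beta>_def[symmetric] using t_polar by (simp add: mult_ac)
qed

lemma contour_integral_circlepath_inversion:
  assumes t: "t \<noteq> 0" "norm t \<le> 1"
    and V: "open V" "annulus (norm t) 1 \<subseteq> V" and hol: "g holomorphic_on V"
  shows "contour_integral (circlepath 0 1) (\<lambda>\<zeta>. g \<zeta> / \<zeta>)
    = contour_integral (circlepath 0 1) (\<lambda>\<omega>. g (t / \<omega>) / \<omega>)"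
proof -
  define \<phi> where "\<phi> = (\<lambda>\<omega>::complex. t / \<omega>)"
  define r where "r = norm t"
  have "0 < r"
    using t by (simp add: r_def)
  have annulus_V: "annulus r 1 \<subseteq> V - {0}"
    using V(2) \<open>0 < r\<close> by (auto simp: r_def annulus_def)
  have g_hol: "(\<lambda>\<zeta>. g \<zeta> / \<zeta>) holomorphic_on V - {0}"
    using hol by (auto intro!: holomorphic_intros elim: holomorphic_on_subset)
  have \<phi>_analytic: "\<phi> analytic_on - {0}"
    unfolding \<phi>_def by (subst analytic_on_open) (auto intro!: holomorphic_intros)
  have unit_circle: "path_image (circlepath 0 1) \<subseteq> - {0}"
    by auto
  have "contour_integral (\<phi> \<circ> circlepath 0 1) (\<lambda>\<zeta>. g \<zeta> / \<zeta>)
      = contour_integral (circlepath 0 1) (\<lambda>\<omega>. deriv \<phi> \<omega> * (g (\<phi> \<omega>) / \<phi> \<omega>))"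
    by (rule contour_integral_comp_analyticW[OF \<phi>_analytic valid_path_circlepath unit_circle])
  also have "\<dots> = contour_integral (circlepath 0 1) (\<lambda>\<omega>. - (g (t / \<omega>) / \<omega>))"
  proof (rule contour_integral_eq)
    fix \<omega>
    assume "\<omega> \<in> path_image (circlepath 0 1)"
    then have "\<omega> \<noteq> 0"
      by auto
    then have \<phi>_deriv: "deriv \<phi> \<omega> = - t / \<omega>^2"
      unfolding \<phi>_def by (intro DERIV_imp_deriv) (auto intro!: derivative_eq_intros simp: power2_eq_square)
    show "deriv \<phi> \<omega> * (g (\<phi> \<omega>) / \<phi> \<omega>) = - (g (t / \<omega>) / \<omega>)"
      unfolding \<phi>_deriv using \<open>\<omega> \<noteq> 0\<close> t by (simp add: \<phi>_def power2_eq_square field_simps)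
  qed
  also have "\<dots> = - contour_integral (circlepath 0 1) (\<lambda>\<omega>. g (t / \<omega>) / \<omega>)"
    by (rule contour_integral_neg)
  finally have image_integral: "contour_integral (\<phi> \<circ> circlepath 0 1) (\<lambda>\<zeta>. g \<zeta> / \<zeta>)
      = - contour_integral (circlepath 0 1) (\<lambda>\<omega>. g (t / \<omega>) / \<omega>)" .
  define \<beta> where "\<beta> = Arg2pi t / (2 * pi)"
  have \<beta>: "0 \<le> \<beta>" "\<beta> \<le> 1"
    using Arg2pi[of t] by (auto simp: \<beta>_def)
  have image_path: "reversepath (\<phi> \<circ> circlepath 0 1) = shiftpath \<beta> (circlepath 0 r)"
    unfolding \<phi>_def \<beta>_def r_def by (rule reversepath_inversion_circlepath)
  have "contour_integral (circlepath 0 1) (\<lambda>\<zeta>. g \<zeta> / \<zeta>) = contour_integral (circlepath 0 r) (\<lambda>\<zeta>. g \<zeta> / \<zeta>)"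
    using homotopic_loops_circlepath_annulus[OF _ _ annulus_V] \<open>0 < r\<close> t
    by (intro Cauchy_theorem_homotopic_loops[OF _ _ g_hol]) (auto simp: r_def V(1) open_Diff)
  also have "\<dots> = contour_integral (shiftpath \<beta> (circlepath 0 r)) (\<lambda>\<zeta>. g \<zeta> / \<zeta>)"
    using \<beta> by (intro contour_integral_shiftpath[symmetric]) auto
  also have "\<dots> = - contour_integral (\<phi> \<circ> circlepath 0 1) (\<lambda>\<zeta>. g \<zeta> / \<zeta>)"
    unfolding image_path[symmetric]
    by (rule contour_integral_reversepath)
      (rule valid_path_compose_analytic[OF valid_path_circlepath \<phi>_analytic unit_circle])
  finally show ?thesis
    using image_integral by simp
qed

lemma Cauchy_integral_formula_of_uniform_limit:
  fixes h :: "nat \<Rightarrow> complex \<Rightarrow> complex" and \<rho> :: "nat \<Rightarrow> real"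
  assumes \<rho>: "\<rho> \<longlonglongrightarrow> 0" "\<And>n. 0 \<le> \<rho> n"
    and V: "\<And>n. open (V n)" "\<And>n. annulus (\<rho> n) 1 \<subseteq> V n" "\<And>n. h n holomorphic_on V n"
    and lim: "uniform_limit half_annulus h F sequentially" "continuous_on half_annulus F"
    and bound: "\<forall>\<^sub>F n in sequentially. (\<forall>\<zeta>\<in>half_annulus. norm (h n \<zeta>) \<le> M)
      \<and> (\<forall>\<zeta>. 0 < \<rho> n \<longrightarrow> norm \<zeta> = \<rho> n \<longrightarrow> norm (h n \<zeta>) \<le> M)"
    and z: "1/2 \<le> norm z" "norm z < 1"
  shows "contour_integral (circlepath 0 1) (\<lambda>\<zeta>. F \<zeta> / (\<zeta> - z)) = 2 * pi * \<i> * F z"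
proof -
  have small: "\<forall>\<^sub>F n in sequentially. \<rho> n \<le> 1/4"
    using order_tendstoD(2)[OF \<rho>(1), of "1/4"] by (auto elim: eventually_mono)
  have "\<forall>\<^sub>F n in sequentially. continuous_on (sphere 0 1) (h n)"
    using small
  proof (rule eventually_mono)
    fix n
    assume "\<rho> n \<le> 1/4"
    then have "sphere 0 1 \<subseteq> V n"
      using V(2) \<rho>(2) sphere_subset_annulus[of "\<rho> n" 1 1] by force
    then show "continuous_on (sphere 0 1) (h n)"
      using holomorphic_on_imp_continuous_on[OF V(3)] continuous_on_subset by blast
  qed
  then have "(\<lambda>n. contour_integral (circlepath 0 1) (\<lambda>\<zeta>. h n \<zeta> / (\<zeta> - z)))
      \<longlonglongrightarrow> contour_integral (circlepath 0 1) (\<lambda>\<zeta>. F \<zeta> / (\<zeta> - z))"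
    using z sphere_subset_half_annulus
    by (intro Cauchy_integral_circlepath_uniform_limit uniform_limit_on_subset[OF lim(1)]
        continuous_on_subset[OF lim(2)]) auto
  moreover have "(\<lambda>n. contour_integral (circlepath 0 1) (\<lambda>\<zeta>. h n \<zeta> / (\<zeta> - z)))
      \<longlonglongrightarrow> 2 * pi * \<i> * F z"
  proof -
    have "(\<lambda>n. contour_integral (circlepath 0 1) (\<lambda>\<zeta>. h n \<zeta> / (\<zeta> - z)) - 2 * pi * \<i> * h n z)
        \<longlonglongrightarrow> 0"
    proof (rule Lim_null_comparison)
      show "\<forall>\<^sub>F n in sequentially.
          norm (contour_integral (circlepath 0 1) (\<lambda>\<zeta>. h n \<zeta> / (\<zeta> - z)) - 2 * pi * \<i> * h n z)
          \<le> 16 * pi * M * \<rho> n"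
        using eventually_conj[OF small bound]
      proof (rule eventually_mono)
        fix n
        assume "\<rho> n \<le> 1/4 \<and> (\<forall>\<zeta>\<in>half_annulus. norm (h n \<zeta>) \<le> M)
          \<and> (\<forall>\<zeta>. 0 < \<rho> n \<longrightarrow> norm \<zeta> = \<rho> n \<longrightarrow> norm (h n \<zeta>) \<le> M)"
        then show "norm (contour_integral (circlepath 0 1) (\<lambda>\<zeta>. h n \<zeta> / (\<zeta> - z)) - 2 * pi * \<i> * h n z)
            \<le> 16 * pi * M * \<rho> n"
          using Cauchy_integral_circlepath_error[OF V(1) V(2) V(3) \<rho>(2) _ _ _ z] by blast
      qed
      show "(\<lambda>n. 16 * pi * M * \<rho> n) \<longlonglongrightarrow> 0"
        using \<rho>(1) by (rule tendsto_mult_right_zero)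
    qed
    moreover have "(\<lambda>n. h n z) \<longlonglongrightarrow> F z"
      using z by (intro tendsto_uniform_limitI[OF lim(1)]) (simp add: half_annulus_def)
    ultimately have "(\<lambda>n. (contour_integral (circlepath 0 1) (\<lambda>\<zeta>. h n \<zeta> / (\<zeta> - z)) - 2 * pi * \<i> * h n z)
        + 2 * pi * \<i> * h n z) \<longlonglongrightarrow> 0 + 2 * pi * \<i> * F z"
      by (intro tendsto_add tendsto_mult_left)
    then show ?thesis
      by simp
  qed
  ultimately show ?thesis
    by (rule LIMSEQ_unique)
qed

definition disc_extension :: "(complex \<Rightarrow> complex) \<Rightarrow> complex \<Rightarrow> complex" where
  "disc_extension F z = (if norm z < 1
     then contour_integral (circlepath 0 1) (\<lambda>\<zeta>. F \<zeta> / (\<zeta> - z)) / (2 * pi * \<i>) else F z)"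

lemma holomorphic_on_disc_extension:
  assumes "continuous_on (sphere 0 1) F"
  shows "disc_extension F holomorphic_on ball 0 1"
proof (rule holomorphic_transform)
  show "(\<lambda>z. contour_integral (circlepath 0 1) (\<lambda>\<zeta>. F \<zeta> / (\<zeta> - z)) / (2 * pi * \<i>)) holomorphic_on ball 0 1"
    by (intro holomorphic_intros Cauchy_integral_circlepath_holomorphic assms) simp
qed (simp add: disc_extension_def)

lemma disc_extension_eq:
  assumes reproducing: "\<And>z. 1/2 \<le> norm z \<Longrightarrow> norm z < 1
      \<Longrightarrow> contour_integral (circlepath 0 1) (\<lambda>\<zeta>. F \<zeta> / (\<zeta> - z)) = 2 * pi * \<i> * F z"
    and z: "z \<in> half_annulus"
  shows "disc_extension F z = F z"
  using reproducing[of z] z by (simp add: disc_extension_def half_annulus_def)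

lemma continuous_on_disc_extension:
  assumes cont: "continuous_on half_annulus F"
    and reproducing: "\<And>z. 1/2 \<le> norm z \<Longrightarrow> norm z < 1
      \<Longrightarrow> contour_integral (circlepath 0 1) (\<lambda>\<zeta>. F \<zeta> / (\<zeta> - z)) = 2 * pi * \<i> * F z"
  shows "continuous_on (cball 0 1) (disc_extension F)"
proof -
  have "continuous_on (ball 0 1) (disc_extension F)"
    using continuous_on_subset[OF cont sphere_subset_half_annulus]
    by (rule holomorphic_on_imp_continuous_on[OF holomorphic_on_disc_extension])
  then have "continuous_on (cball 0 (3/4)) (disc_extension F)"
    by (rule continuous_on_subset) auto
  moreover have "continuous_on half_annulus (disc_extension F)"
    using cont by (rule continuous_on_eq) (simp add: disc_extension_eq[OF reproducing])
  moreover have "cball 0 1 = cball 0 (3/4) \<union> half_annulus"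
    by (auto simp: half_annulus_def)
  ultimately show ?thesis
    by (metis continuous_on_closed_Un closed_cball closed_annulus half_annulus_eq_annulus)
qed

lemma holomorphic_on_A0_glue:
  assumes P: "continuous_on (cball 0 1) P" "P holomorphic_on ball 0 1"
    and Q: "continuous_on (cball 0 1) Q" "Q holomorphic_on ball 0 1"
    and "P 0 = Q 0"
  shows "holomorphic_on_A0 (\<lambda>p. if snd p = 0 then P (fst p) else Q (snd p))"
  unfolding holomorphic_on_A0_def
proof (intro conjI)
  let ?g = "\<lambda>p. if snd p = 0 then P (fst p) else Q (snd p)"
  define D1 where "D1 = {p::complex \<times> complex. snd p = 0 \<and> norm (fst p) \<le> 1}"
  define D2 where "D2 = {p::complex \<times> complex. fst p = 0 \<and> norm (snd p) \<le> 1}"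
  have "continuous_on D1 (\<lambda>p. P (fst p))"
    unfolding D1_def by (rule continuous_on_compose2[OF P(1) continuous_on_fst[OF continuous_on_id]]) auto
  then have "continuous_on D1 ?g"
    by (rule continuous_on_eq) (simp add: D1_def)
  moreover have "continuous_on D2 (\<lambda>p. Q (snd p))"
    unfolding D2_def by (rule continuous_on_compose2[OF Q(1) continuous_on_snd[OF continuous_on_id]]) auto
  then have "continuous_on D2 ?g"
    by (rule continuous_on_eq) (auto simp: D2_def \<open>P 0 = Q 0\<close>)
  moreover have "closed D1" "closed D2"
    unfolding D1_def D2_def by (intro closed_Collect_conj closed_Collect_eq closed_Collect_le continuous_intros)+
  ultimately have "continuous_on (D1 \<union> D2) ?g"
    by (intro continuous_on_closed_Un)
  moreover have "Aset 0 = D1 \<union> D2"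
    by (auto simp: Aset_def D1_def D2_def)
  ultimately show "continuous_on (Aset 0) ?g"
    by simp
  show "(\<lambda>z. ?g (z, 0)) holomorphic_on ball 0 1"
    using P(2) by simp
  show "(\<lambda>w. ?g (0, w)) holomorphic_on ball 0 1"
    by (rule holomorphic_transform[OF Q(2)]) (simp add: \<open>P 0 = Q 0\<close>)
qed

section \<open>The degenerating family\<close>

locale degenerating_family =
  fixes t :: "nat \<Rightarrow> complex" and f :: "nat \<Rightarrow> complex \<times> complex \<Rightarrow> complex"
    and F G :: "complex \<Rightarrow> complex"
  assumes t_lim: "t \<longlonglongrightarrow> 0"
    and f_holo: "\<And>\<nu>. \<exists>U. open U \<and> Aset (t \<nu>) \<subseteq> U \<and> holomorphic2_on (f \<nu>) U"
    and F_lim: "uniform_limit half_annulus (\<lambda>\<nu> z. f \<nu> (z, t \<nu> / z)) F sequentially"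
    and G_lim: "uniform_limit half_annulus (\<lambda>\<nu> w. f \<nu> (t \<nu> / w, w)) G sequentially"
    and F_cont: "continuous_on half_annulus F"
    and G_cont: "continuous_on half_annulus G"
begin

(* For t \<nu> = 0 this is f \<nu> (z, 0) for every z, including z = 0, since 0 / 0 = 0. *)
definition Fseq :: "nat \<Rightarrow> complex \<Rightarrow> complex" where
  "Fseq = (\<lambda>\<nu> z. f \<nu> (z, t \<nu> / z))"

definition Gseq :: "nat \<Rightarrow> complex \<Rightarrow> complex" where
  "Gseq = (\<lambda>\<nu> w. f \<nu> (t \<nu> / w, w))"

(* Interchanging the two coordinates exchanges the roles of F and G, so every result about F
   and Fseq also holds for G and Gseq. *)
lemma swapped: "degenerating_family t (\<lambda>\<nu> p. f \<nu> (snd p, fst p)) G F"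
proof unfold_locales
  fix \<nu>
  obtain U where U: "open U" "Aset (t \<nu>) \<subseteq> U" "holomorphic2_on (f \<nu>) U"
    using f_holo by blast
  have "open ((\<lambda>p. (snd p, fst p)) -` U)"
    using U(1) by (intro open_vimage continuous_intros)
  moreover have "Aset (t \<nu>) \<subseteq> (\<lambda>p. (snd p, fst p)) -` U"
    using U(2) by (auto simp: Aset_def mult.commute)
  ultimately show "\<exists>U. open U \<and> Aset (t \<nu>) \<subseteq> U \<and> holomorphic2_on (\<lambda>p. f \<nu> (snd p, fst p)) U"
    using holomorphic2_on_swap[OF U(3)] by blast
qed (simp_all add: t_lim F_lim G_lim F_cont G_cont)

lemma swapped_Fseq: "degenerating_family.Fseq t (\<lambda>\<nu> p. f \<nu> (snd p, fst p)) = Gseq"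
  by (simp add: degenerating_family.Fseq_def[OF swapped] Gseq_def)

lemma swapped_Gseq: "degenerating_family.Gseq t (\<lambda>\<nu> p. f \<nu> (snd p, fst p)) = Fseq"
  by (simp add: degenerating_family.Gseq_def[OF swapped] Fseq_def)

lemma Fseq_inversion: "t \<nu> \<noteq> 0 \<Longrightarrow> z \<noteq> 0 \<Longrightarrow> Fseq \<nu> z = Gseq \<nu> (t \<nu> / z)"
  by (simp add: Fseq_def Gseq_def)

lemma Fseq_holomorphic_near_annulus:
  "\<exists>V. open V \<and> annulus (norm (t \<nu>)) 1 \<subseteq> V \<and> Fseq \<nu> holomorphic_on V"
  using f_holo[of \<nu>] holomorphic_slice_near_annulus unfolding Fseq_def by blast

lemma eventually_norm_t_le:
  assumes "0 < e"
  shows "\<forall>\<^sub>F \<nu> in sequentially. norm (t \<nu>) \<le> e"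
  using order_tendstoD(2)[OF tendsto_norm_zero[OF t_lim] assms] by (rule eventually_mono) simp

lemma eventually_continuous_on_sphere: "\<forall>\<^sub>F \<nu> in sequentially. continuous_on (sphere 0 1) (Fseq \<nu>)"
  using eventually_norm_t_le[OF zero_less_one]
proof (rule eventually_mono)
  fix \<nu>
  assume "norm (t \<nu>) \<le> 1"
  obtain V where V: "annulus (norm (t \<nu>)) 1 \<subseteq> V" "Fseq \<nu> holomorphic_on V"
    using Fseq_holomorphic_near_annulus by blast
  have "sphere 0 1 \<subseteq> V"
    using sphere_subset_annulus[of "norm (t \<nu>)" 1 1] \<open>norm (t \<nu>) \<le> 1\<close> V(1) by auto
  then show "continuous_on (sphere 0 1) (Fseq \<nu>)"
    using holomorphic_on_imp_continuous_on[OF V(2)] continuous_on_subset by blast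
qed

(* On the circle |z| = 2|t \<nu>| the inversion turns the bound for Gseq on |w| = 1/2 into one for Fseq. *)
lemma Fseq_eventually_bounded:
  "\<exists>M. \<forall>\<^sub>F \<nu> in sequentially. (\<forall>\<zeta>\<in>half_annulus. norm (Fseq \<nu> \<zeta>) \<le> M)
      \<and> (\<forall>\<zeta>. 0 < 2 * norm (t \<nu>) \<longrightarrow> norm \<zeta> = 2 * norm (t \<nu>) \<longrightarrow> norm (Fseq \<nu> \<zeta>) \<le> M)"
proof -
  have compact: "compact half_annulus"
    by (simp add: half_annulus_eq_annulus compact_annulus)
  obtain M1 where M1: "\<forall>\<^sub>F \<nu> in sequentially. \<forall>\<zeta>\<in>half_annulus. norm (Fseq \<nu> \<zeta>) \<le> M1"
    using uniform_limit_eventually_bounded[OF F_lim compact F_cont] by (auto simp: Fseq_def)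
  obtain M2 where M2: "\<forall>\<^sub>F \<nu> in sequentially. \<forall>\<zeta>\<in>half_annulus. norm (Gseq \<nu> \<zeta>) \<le> M2"
    using uniform_limit_eventually_bounded[OF G_lim compact G_cont] by (auto simp: Gseq_def)
  have "\<forall>\<^sub>F \<nu> in sequentially. (\<forall>\<zeta>\<in>half_annulus. norm (Fseq \<nu> \<zeta>) \<le> max M1 M2)
      \<and> (\<forall>\<zeta>. 0 < 2 * norm (t \<nu>) \<longrightarrow> norm \<zeta> = 2 * norm (t \<nu>) \<longrightarrow> norm (Fseq \<nu> \<zeta>) \<le> max M1 M2)"
    using eventually_conj[OF M1 M2]
  proof (rule eventually_mono)
    fix \<nu>
    assume bounds: "(\<forall>\<zeta>\<in>half_annulus. norm (Fseq \<nu> \<zeta>) \<le> M1) \<and> (\<forall>\<zeta>\<in>half_annulus. norm (Gseq \<nu> \<zeta>) \<le> M2)"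
    have "norm (Fseq \<nu> \<zeta>) \<le> max M1 M2" if "0 < 2 * norm (t \<nu>)" "norm \<zeta> = 2 * norm (t \<nu>)" for \<zeta>
    proof -
      have "Fseq \<nu> \<zeta> = Gseq \<nu> (t \<nu> / \<zeta>)"
        using that by (intro Fseq_inversion) auto
      moreover have "t \<nu> / \<zeta> \<in> half_annulus"
        using that by (simp add: half_annulus_def norm_divide)
      ultimately show ?thesis
        using bounds by fastforce
    qed
    then show "(\<forall>\<zeta>\<in>half_annulus. norm (Fseq \<nu> \<zeta>) \<le> max M1 M2)
        \<and> (\<forall>\<zeta>. 0 < 2 * norm (t \<nu>) \<longrightarrow> norm \<zeta> = 2 * norm (t \<nu>) \<longrightarrow> norm (Fseq \<nu> \<zeta>) \<le> max M1 M2)"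
      using bounds by fastforce
  qed
  then show ?thesis
    by blast
qed

lemma Cauchy_integral_formula_F:
  assumes "1/2 \<le> norm z" "norm z < 1"
  shows "contour_integral (circlepath 0 1) (\<lambda>\<zeta>. F \<zeta> / (\<zeta> - z)) = 2 * pi * \<i> * F z"
proof -
  obtain M where bound: "\<forall>\<^sub>F \<nu> in sequentially. (\<forall>\<zeta>\<in>half_annulus. norm (Fseq \<nu> \<zeta>) \<le> M)
      \<and> (\<forall>\<zeta>. 0 < 2 * norm (t \<nu>) \<longrightarrow> norm \<zeta> = 2 * norm (t \<nu>) \<longrightarrow> norm (Fseq \<nu> \<zeta>) \<le> M)"
    using Fseq_eventually_bounded by blast
  obtain V where V: "\<And>\<nu>. open (V \<nu>)" "\<And>\<nu>. annulus (norm (t \<nu>)) 1 \<subseteq> V \<nu>"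
    "\<And>\<nu>. Fseq \<nu> holomorphic_on V \<nu>"
    using Fseq_holomorphic_near_annulus by metis
  have radius: "(\<lambda>\<nu>. 2 * norm (t \<nu>)) \<longlonglongrightarrow> 0"
    using tendsto_mult_right_zero[OF tendsto_norm_zero[OF t_lim]] .
  have annulus_V: "annulus (2 * norm (t \<nu>)) 1 \<subseteq> V \<nu>" for \<nu>
    using annulus_antimono[of "norm (t \<nu>)" "2 * norm (t \<nu>)" 1] V(2) by auto
  have lim: "uniform_limit half_annulus Fseq F sequentially"
    using F_lim by (simp add: Fseq_def)
  show ?thesis
    by (rule Cauchy_integral_formula_of_uniform_limit[OF radius _ V(1) annulus_V V(3) lim F_cont bound assms])
      simp
qed

lemma Cauchy_integral_Fseq_eq_Gseq_at_0:
  assumes "norm (t \<nu>) \<le> 1"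
  shows "contour_integral (circlepath 0 1) (\<lambda>\<zeta>. Fseq \<nu> \<zeta> / \<zeta>)
    = contour_integral (circlepath 0 1) (\<lambda>\<zeta>. Gseq \<nu> \<zeta> / \<zeta>)"
proof (cases "t \<nu> = 0")
  case True
  interpret swapped: degenerating_family t "\<lambda>\<nu> p. f \<nu> (snd p, fst p)" G F
    by (rule swapped)
  obtain V where V: "annulus 0 1 \<subseteq> V" "Fseq \<nu> holomorphic_on V"
    using Fseq_holomorphic_near_annulus[of \<nu>] True by auto
  obtain W where W: "annulus 0 1 \<subseteq> W" "Gseq \<nu> holomorphic_on W"
    using swapped.Fseq_holomorphic_near_annulus[of \<nu>] True by (auto simp: swapped_Fseq)
  have "cball 0 1 = annulus 0 1"
    by (auto simp: annulus_def)
  then have F_hol: "Fseq \<nu> holomorphic_on cball 0 1" and G_hol: "Gseq \<nu> holomorphic_on cball 0 1"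
    using V W by (auto elim: holomorphic_on_subset)
  have "((\<lambda>\<zeta>. Fseq \<nu> \<zeta> / (\<zeta> - 0)) has_contour_integral 2 * pi * \<i> * Fseq \<nu> 0) (circlepath 0 1)"
    using Cauchy_integral_circlepath_simple[OF F_hol, of 0] by simp
  moreover have "((\<lambda>\<zeta>. Gseq \<nu> \<zeta> / (\<zeta> - 0)) has_contour_integral 2 * pi * \<i> * Gseq \<nu> 0) (circlepath 0 1)"
    using Cauchy_integral_circlepath_simple[OF G_hol, of 0] by simp
  moreover have "Fseq \<nu> 0 = Gseq \<nu> 0"
    by (simp add: Fseq_def Gseq_def)
  ultimately show ?thesis
    using contour_integral_unique by fastforce
next
  case False
  obtain V where V: "open V" "annulus (norm (t \<nu>)) 1 \<subseteq> V" "Fseq \<nu> holomorphic_on V"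
    using Fseq_holomorphic_near_annulus by blast
  have "contour_integral (circlepath 0 1) (\<lambda>\<zeta>. Fseq \<nu> \<zeta> / \<zeta>)
      = contour_integral (circlepath 0 1) (\<lambda>\<omega>. Fseq \<nu> (t \<nu> / \<omega>) / \<omega>)"
    using False assms V by (rule contour_integral_circlepath_inversion)
  also have "\<dots> = contour_integral (circlepath 0 1) (\<lambda>\<zeta>. Gseq \<nu> \<zeta> / \<zeta>)"
    by (rule contour_integral_eq) (simp add: Fseq_def Gseq_def False)
  finally show ?thesis .
qed

lemma Cauchy_integral_F_eq_G_at_0:
  "contour_integral (circlepath 0 1) (\<lambda>\<zeta>. F \<zeta> / \<zeta>) = contour_integral (circlepath 0 1) (\<lambda>\<zeta>. G \<zeta> / \<zeta>)"
proof -
  interpret swapped: degenerating_family t "\<lambda>\<nu> p. f \<nu> (snd p, fst p)" G F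
    by (rule swapped)
  have F_limit: "(\<lambda>\<nu>. contour_integral (circlepath 0 1) (\<lambda>\<zeta>. Fseq \<nu> \<zeta> / (\<zeta> - 0)))
      \<longlonglongrightarrow> contour_integral (circlepath 0 1) (\<lambda>\<zeta>. F \<zeta> / (\<zeta> - 0))"
    using F_lim F_cont sphere_subset_half_annulus eventually_continuous_on_sphere
    by (intro Cauchy_integral_circlepath_uniform_limit)
      (auto simp: Fseq_def intro: uniform_limit_on_subset continuous_on_subset)
  have G_limit: "(\<lambda>\<nu>. contour_integral (circlepath 0 1) (\<lambda>\<zeta>. Gseq \<nu> \<zeta> / (\<zeta> - 0)))
      \<longlonglongrightarrow> contour_integral (circlepath 0 1) (\<lambda>\<zeta>. G \<zeta> / (\<zeta> - 0))"
    using G_lim G_cont sphere_subset_half_annulus swapped.eventually_continuous_on_sphere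
    by (intro Cauchy_integral_circlepath_uniform_limit)
      (auto simp: Gseq_def swapped_Fseq intro: uniform_limit_on_subset continuous_on_subset)
  have "\<forall>\<^sub>F \<nu> in sequentially. contour_integral (circlepath 0 1) (\<lambda>\<zeta>. Fseq \<nu> \<zeta> / (\<zeta> - 0))
      = contour_integral (circlepath 0 1) (\<lambda>\<zeta>. Gseq \<nu> \<zeta> / (\<zeta> - 0))"
    using eventually_norm_t_le[OF zero_less_one]
    by (rule eventually_mono) (simp add: Cauchy_integral_Fseq_eq_Gseq_at_0)
  with F_limit have "(\<lambda>\<nu>. contour_integral (circlepath 0 1) (\<lambda>\<zeta>. Gseq \<nu> \<zeta> / (\<zeta> - 0)))
      \<longlonglongrightarrow> contour_integral (circlepath 0 1) (\<lambda>\<zeta>. F \<zeta> / (\<zeta> - 0))"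
    by (rule Lim_transform_eventually)
  from LIMSEQ_unique[OF this G_limit] show ?thesis
    by simp
qed

lemma Fseq_le_on_annulus:
  assumes "norm (t \<nu>) \<le> 1"
    and Fseq_le: "\<And>z. norm z = 1 \<Longrightarrow> norm (Fseq \<nu> z) \<le> B"
    and Gseq_le: "\<And>w. norm w = 1 \<Longrightarrow> norm (Gseq \<nu> w) \<le> B"
    and z: "z \<in> annulus (norm (t \<nu>)) 1"
  shows "norm (Fseq \<nu> z) \<le> B"
proof -
  obtain V where V: "annulus (norm (t \<nu>)) 1 \<subseteq> V" "Fseq \<nu> holomorphic_on V"
    using Fseq_holomorphic_near_annulus by blast
  show ?thesis
  proof (rule norm_le_on_annulus[OF holomorphic_on_subset[OF V(2) V(1)] norm_ge_zero Fseq_le _ z])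
    fix \<zeta> :: complex
    assume "0 < norm (t \<nu>)" "norm \<zeta> = norm (t \<nu>)"
    then have "\<zeta> \<noteq> 0"
      by auto
    with \<open>0 < norm (t \<nu>)\<close> \<open>norm \<zeta> = norm (t \<nu>)\<close>
    have "Fseq \<nu> \<zeta> = Gseq \<nu> (t \<nu> / \<zeta>)" "norm (t \<nu> / \<zeta>) = 1"
      by (auto simp: Fseq_inversion norm_divide)
    then show "norm (Fseq \<nu> \<zeta>) \<le> B"
      using Gseq_le by simp
  qed
qed

lemma norm_f_le_on_Aset:
  assumes "norm (t \<nu>) \<le> 1"
    and Fseq_le: "\<And>z. norm z = 1 \<Longrightarrow> norm (Fseq \<nu> z) \<le> B"
    and Gseq_le: "\<And>w. norm w = 1 \<Longrightarrow> norm (Gseq \<nu> w) \<le> B"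
    and p: "p \<in> Aset (t \<nu>)"
  shows "norm (f \<nu> p) \<le> B"
proof -
  interpret swapped: degenerating_family t "\<lambda>\<nu> p. f \<nu> (snd p, fst p)" G F
    by (rule swapped)
  obtain z w where p_eq: "p = (z, w)" and zw: "norm z \<le> 1" "norm w \<le> 1" "z * w = t \<nu>"
    using p by (auto simp: Aset_def)
  show ?thesis
  proof (cases "z = 0")
    case False
    then have "w = t \<nu> / z"
      using zw(3) by (simp add: field_simps)
    then have "f \<nu> p = Fseq \<nu> z"
      by (simp add: p_eq Fseq_def)
    moreover have "norm (t \<nu>) \<le> norm z"
      using zw by (metis mult_left_le norm_ge_zero norm_mult)
    then have "z \<in> annulus (norm (t \<nu>)) 1"
      using zw by (simp add: annulus_def)
    ultimately show ?thesis
      using Fseq_le_on_annulus[OF assms(1) Fseq_le Gseq_le] by simp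
  next
    case True
    then have "t \<nu> = 0" "f \<nu> p = Gseq \<nu> w"
      using zw(3) by (auto simp: p_eq Gseq_def)
    moreover have "w \<in> annulus (norm (t \<nu>)) 1"
      using zw \<open>t \<nu> = 0\<close> by (simp add: annulus_def)
    ultimately show ?thesis
      using swapped.Fseq_le_on_annulus[OF assms(1)] Fseq_le Gseq_le
      by (simp add: swapped_Fseq swapped_Gseq)
  qed
qed

lemma eventually_norm_f_le_on_Aset:
  assumes "\<forall>z\<in>half_annulus. F z = 0" "\<forall>w\<in>half_annulus. G w = 0" "0 < e"
  shows "\<forall>\<^sub>F \<nu> in sequentially. Aset (t \<nu>) \<noteq> {} \<and> (\<forall>p\<in>Aset (t \<nu>). norm (f \<nu> p) \<le> e)"
proof -
  have "\<forall>\<^sub>F \<nu> in sequentially. norm (t \<nu>) \<le> 1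
      \<and> (\<forall>z\<in>half_annulus. dist (Fseq \<nu> z) (F z) < e) \<and> (\<forall>z\<in>half_annulus. dist (Gseq \<nu> z) (G z) < e)"
    using eventually_norm_t_le[OF zero_less_one] uniform_limitD[OF F_lim assms(3)]
      uniform_limitD[OF G_lim assms(3)]
    by (intro eventually_conj) (simp_all add: Fseq_def Gseq_def)
  then show ?thesis
  proof (rule eventually_mono)
    fix \<nu>
    assume close: "norm (t \<nu>) \<le> 1
      \<and> (\<forall>z\<in>half_annulus. dist (Fseq \<nu> z) (F z) < e) \<and> (\<forall>z\<in>half_annulus. dist (Gseq \<nu> z) (G z) < e)"
    have "norm (Fseq \<nu> z) \<le> e" "norm (Gseq \<nu> z) \<le> e" if "norm z = 1" for z
    proof -
      have "z \<in> half_annulus"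
        using that by (simp add: half_annulus_def)
      then show "norm (Fseq \<nu> z) \<le> e" "norm (Gseq \<nu> z) \<le> e"
        using close assms by (auto simp: dist_norm intro: less_imp_le)
    qed
    moreover have "(t \<nu>, 1) \<in> Aset (t \<nu>)"
      using close by (simp add: Aset_def)
    ultimately show "Aset (t \<nu>) \<noteq> {} \<and> (\<forall>p\<in>Aset (t \<nu>). norm (f \<nu> p) \<le> e)"
      using close norm_f_le_on_Aset by blast
  qed
qed

end

theorem lemmaA8:
  fixes t :: "nat \<Rightarrow> complex"
    and f :: "nat \<Rightarrow> complex \<times> complex \<Rightarrow> complex"
    and F G :: "complex \<Rightarrow> complex"
  assumes t_lim: "t \<longlonglongrightarrow> 0"
    and f_holo: "\<And>\<nu>. \<exists>U. open U \<and> Aset (t \<nu>) \<subseteq> U \<and> holomorphic2_on (f \<nu>) U"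
    and F_lim: "uniform_limit half_annulus (\<lambda>\<nu> z. f \<nu> (z, t \<nu> / z)) F sequentially"
    and G_lim: "uniform_limit half_annulus (\<lambda>\<nu> w. f \<nu> (t \<nu> / w, w)) G sequentially"
    and F_holo: "F holomorphic_on interior half_annulus" "continuous_on half_annulus F"
    and G_holo: "G holomorphic_on interior half_annulus" "continuous_on half_annulus G"
  shows "(\<exists>g. holomorphic_on_A0 g
              \<and> (\<forall>z\<in>half_annulus. g (z, 0) = F z)
              \<and> (\<forall>w\<in>half_annulus. g (0, w) = G w))
       \<and> ((\<forall>z\<in>half_annulus. F z = 0) \<and> (\<forall>w\<in>half_annulus. G w = 0)
            \<longrightarrow> (\<lambda>\<nu>. Sup ((\<lambda>p. norm (f \<nu> p)) ` Aset (t \<nu>))) \<longlonglongrightarrow> 0)"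
proof -
  interpret degenerating_family t f F G
    using t_lim f_holo F_lim G_lim F_holo(2) G_holo(2) by unfold_locales
  interpret swapped: degenerating_family t "\<lambda>\<nu> p. f \<nu> (snd p, fst p)" G F
    by (rule swapped)
  have F_ext: "continuous_on (cball 0 1) (disc_extension F)" "disc_extension F holomorphic_on ball 0 1"
    using continuous_on_disc_extension[OF F_holo(2) Cauchy_integral_formula_F]
      holomorphic_on_disc_extension[OF continuous_on_subset[OF F_holo(2) sphere_subset_half_annulus]]
    by blast+
  have G_ext: "continuous_on (cball 0 1) (disc_extension G)" "disc_extension G holomorphic_on ball 0 1"
    using continuous_on_disc_extension[OF G_holo(2) swapped.Cauchy_integral_formula_F]
      holomorphic_on_disc_extension[OF continuous_on_subset[OF G_holo(2) sphere_subset_half_annulus]]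
    by blast+
  have "disc_extension F 0 = disc_extension G 0"
    using Cauchy_integral_F_eq_G_at_0 by (simp add: disc_extension_def)
  define g where "g p = (if snd p = 0 then disc_extension F (fst p) else disc_extension G (snd p))" for p
  have "holomorphic_on_A0 g"
    unfolding g_def by (rule holomorphic_on_A0_glue[OF F_ext G_ext \<open>disc_extension F 0 = disc_extension G 0\<close>])
  moreover have "g (z, 0) = F z" "g (0, w) = G w" if "z \<in> half_annulus" "w \<in> half_annulus" for z w
    using that disc_extension_eq[OF Cauchy_integral_formula_F] disc_extension_eq[OF swapped.Cauchy_integral_formula_F]
    by (auto simp: g_def half_annulus_def)
  moreover have "(\<lambda>\<nu>. Sup ((\<lambda>p. norm (f \<nu> p)) ` Aset (t \<nu>))) \<longlonglongrightarrow> 0"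
    if "\<forall>z\<in>half_annulus. F z = 0" "\<forall>w\<in>half_annulus. G w = 0"
    using that by (intro Sup_norm_tendsto_zeroI eventually_norm_f_le_on_Aset)
  ultimately show ?thesis
    by blast
qed

end
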